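(* Let $\mathscr{A}=(Q,\{0,1\},\delta)$ be an NFA with $Q=\{q_1,\dots,q_n\}$ and let $\ell>0$ be an integer. For every $t=0,1,\dots,\ell$, every truth assignment $\varphi$ on the set $X=\{x_1,\dots,x_\ell\}$ of letter variables has a unique extension $\overline{\varphi}$ to the token variables $y_{ij}^s$ ($i,j=1,\dots,n$, $s=0,\dots,t$) that makes all clauses in $C_0$ and all formulas $\Psi_{ij}^s$ ($i,j=1,\dots,n$, $s=1,\dots,t$) true. Moreover, the token variable $y_{ij}^s$ gets value $1$ under $\overline{\varphi}$ if and only if after the moves $\varphi(x_1),\dots,\varphi(x_s)$ of the game $\Gamma$, one of the tokens held by the state $q_j$ is $\mathbf{i}$ (equivalently, $q_j\in q_i.\varphi(x_1)\cdots\varphi(x_s)$).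
   Context: An NFA is $\mathscr{A}=(Q,\Sigma,\delta)$ with $\delta\colon Q\times\Sigma\to\mathcal{P}(Q)$; $\delta$ extends to words by $\delta(X,\varepsilon)=X$ and $\delta(X,sw')=\bigcup_{q\in X}\delta(\delta(q,s),w')$, written $q.w=\delta(\{q\},w)$. The game $\Gamma$: initially each state $q_i$ holds exactly one token $\mathbf{i}$; at each move a symbol $a$ is chosen, and after the move token $\mathbf{i}$ is at state $p$ iff $p\in q.a$ for some state $q$ that held $\mathbf{i}$ just before the move (tokens at states $q$ with $q.a=\varnothing$ disappear). Variables: letter variables $x_1,\dots,x_\ell$ and token variables $y_{ij}^t$ for $i,j\in\{1,\dots,n\}$, $t\in\{0,\dots,\ell\}$. For $a\in\{0,1\}$ and $q\in Q$, let $P_a(q)=\{p\in Q\mid q\in p.a\}$. $C_0$ is the set of one-literal clauses $y_{ii}^0$ ($i=1,\dots,n$) and $\neg y_{ij}^0$ ($i\neq j$). For $t=1,\dots,\ell$ and $i,j=1,\dots,n$, $\Psi_{ij}^t$ is the propositional formula $y_{ij}^t\Longleftrightarrow\bigl(x_t\wedge\bigvee_{q_k\in P_1(q_j)}y_{ik}^{t-1}\bigr)\vee\bigl(\neg x_t\wedge\bigvee_{q_h\in P_0(q_j)}y_{ih}^{t-1}\bigr)$, where an empty disjunction is false. A truth assignment with $x_t\mapsto a$ is identified with choosing symbol $a$ at the $t$-th move. *)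

theory Defs
  imports "HOL-Library.FuncSet"
begin

(* Alphabet {0,1} is encoded as bool: False = symbol 0, True = symbol 1.
   States q_1..q_n are the natural numbers 1..n.
   An NFA is delta :: nat => bool => nat set (transition function). *)

type_synonym nfa = "nat \<Rightarrow> bool \<Rightarrow> nat set"

definition nfa_wf :: "nat \<Rightarrow> nfa \<Rightarrow> bool" where
  "nfa_wf n \<delta> \<longleftrightarrow> (\<forall>q\<in>{1..n}. \<forall>a. \<delta> q a \<subseteq> {1..n})"

fun delta_ext :: "nfa \<Rightarrow> nat set \<Rightarrow> bool list \<Rightarrow> nat set" where
  "delta_ext \<delta> X [] = X"
| "delta_ext \<delta> X (s # w) = (\<Union>q\<in>X. delta_ext \<delta> (\<delta> q s) w)"

(* The game Gamma: configuration  holds q i  = "state q holds token i". *)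
definition game_init :: "nat \<Rightarrow> nat \<Rightarrow> nat \<Rightarrow> bool" where
  "game_init n q i \<longleftrightarrow> q \<in> {1..n} \<and> q = i"

definition game_move :: "nfa \<Rightarrow> (nat \<Rightarrow> nat \<Rightarrow> bool) \<Rightarrow> bool \<Rightarrow> (nat \<Rightarrow> nat \<Rightarrow> bool)" where
  "game_move \<delta> H a = (\<lambda>p i. \<exists>q. H q i \<and> p \<in> \<delta> q a)"

definition game :: "nat \<Rightarrow> nfa \<Rightarrow> bool list \<Rightarrow> (nat \<Rightarrow> nat \<Rightarrow> bool)" where
  "game n \<delta> w = foldl (game_move \<delta>) (game_init n) w"

definition Pred :: "nat \<Rightarrow> nfa \<Rightarrow> bool \<Rightarrow> nat \<Rightarrow> nat set" where
  "Pred n \<delta> a q = {p \<in> {1..n}. q \<in> \<delta> p a}"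

(* token variable y_ij^s is represented by the triple (i,j,s);
   phi t is the truth value of letter variable x_t;
   psi is the truth assignment on token variables *)
definition token_vars :: "nat \<Rightarrow> nat \<Rightarrow> (nat \<times> nat \<times> nat) set" where
  "token_vars n t = {1..n} \<times> {1..n} \<times> {0..t}"

definition C0_sat :: "nat \<Rightarrow> (nat \<times> nat \<times> nat \<Rightarrow> bool) \<Rightarrow> bool" where
  "C0_sat n \<psi> \<longleftrightarrow> (\<forall>i\<in>{1..n}. \<psi> (i,i,0)) \<and>
                   (\<forall>i\<in>{1..n}. \<forall>j\<in>{1..n}. i \<noteq> j \<longrightarrow> \<not> \<psi> (i,j,0))"

definition Psi_sat :: "nat \<Rightarrow> nfa \<Rightarrow> (nat \<Rightarrow> bool) \<Rightarrow> (nat \<times> nat \<times> nat \<Rightarrow> bool)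
                        \<Rightarrow> nat \<Rightarrow> nat \<Rightarrow> nat \<Rightarrow> bool" where
  "Psi_sat n \<delta> \<phi> \<psi> i j t \<longleftrightarrow>
     (\<psi> (i,j,t) \<longleftrightarrow>
        (\<phi> t \<and> (\<exists>k\<in>Pred n \<delta> True j. \<psi> (i,k,t-1))) \<or>
        (\<not> \<phi> t \<and> (\<exists>h\<in>Pred n \<delta> False j. \<psi> (i,h,t-1))))"

definition all_sat :: "nat \<Rightarrow> nfa \<Rightarrow> (nat \<Rightarrow> bool) \<Rightarrow> nat \<Rightarrow> (nat \<times> nat \<times> nat \<Rightarrow> bool) \<Rightarrow> bool" where
  "all_sat n \<delta> \<phi> t \<psi> \<longleftrightarrow> C0_sat n \<psi> \<and>
     (\<forall>s\<in>{1..t}. \<forall>i\<in>{1..n}. \<forall>j\<in>{1..n}. Psi_sat n \<delta> \<phi> \<psi> i j s)"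

definition moves :: "(nat \<Rightarrow> bool) \<Rightarrow> nat \<Rightarrow> bool list" where
  "moves \<phi> s = map \<phi> [1..<s+1]"

end

theory Submission
  imports Defs
begin

(* The token variable y_ij^s is forced by C_0 and the Psi's to say "q_j is reached from q_i by
   the first s moves": C_0 fixes level 0, and Psi_ij^s is exactly the recursion of delta_ext on
   the last letter of the word.  So the assignment s |-> [j in q_i.phi(x_1)...phi(x_s)] satisfies
   all formulas, and any satisfying assignment agrees with it by induction on s.  The game
   configuration is the same recursion read token-wise. *)

lemma delta_ext_snoc:
  "delta_ext \<delta> X (w @ [a]) = (\<Union>q\<in>delta_ext \<delta> X w. \<delta> q a)"
  by (induction w arbitrary: X) auto

lemma delta_ext_subset:
  assumes "nfa_wf n \<delta>" and "X \<subseteq> {1..n}"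
  shows "delta_ext \<delta> X w \<subseteq> {1..n}"
  using assms(2)
proof (induction w arbitrary: X)
  case (Cons a w)
  have "\<delta> q a \<subseteq> {1..n}" if "q \<in> X" for q
    using assms(1) Cons.prems that unfolding nfa_wf_def by blast
  then show ?case using Cons.IH by (simp add: UN_least)
qed simp

lemma mem_delta_ext_snoc_iff_Pred:
  assumes "nfa_wf n \<delta>" and "X \<subseteq> {1..n}"
  shows "j \<in> delta_ext \<delta> X (w @ [a]) \<longleftrightarrow> (\<exists>k\<in>Pred n \<delta> a j. k \<in> delta_ext \<delta> X w)"
  using delta_ext_subset[OF assms, of w] by (fastforce simp: delta_ext_snoc Pred_def)

lemma moves_0 [simp]: "moves \<phi> 0 = []"
  unfolding moves_def by simp

lemma moves_Suc: "moves \<phi> (Suc s) = moves \<phi> s @ [\<phi> (Suc s)]"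
  unfolding moves_def by simp

lemma game_iff_delta_ext:
  assumes "i \<in> {1..n}"
  shows "game n \<delta> w j i \<longleftrightarrow> j \<in> delta_ext \<delta> {i} w"
proof (induction w arbitrary: j rule: rev_induct)
  case Nil
  then show ?case using assms by (auto simp: game_def game_init_def)
next
  case (snoc a w)
  then show ?case by (auto simp: game_def game_move_def delta_ext_snoc)
qed

lemma Psi_sat_iff:
  "Psi_sat n \<delta> \<phi> \<psi> i j t \<longleftrightarrow> (\<psi> (i,j,t) \<longleftrightarrow> (\<exists>k\<in>Pred n \<delta> (\<phi> t) j. \<psi> (i,k,t-1)))"
  by (cases "\<phi> t") (auto simp: Psi_sat_def)

lemma all_sat_cong:
  assumes "\<And>x. x \<in> token_vars n t \<Longrightarrow> \<psi> x = \<psi>' x"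
  shows "all_sat n \<delta> \<phi> t \<psi> \<longleftrightarrow> all_sat n \<delta> \<phi> t \<psi>'"
proof -
  have "Psi_sat n \<delta> \<phi> \<psi> i j s \<longleftrightarrow> Psi_sat n \<delta> \<phi> \<psi>' i j s"
    if "s \<in> {1..t}" "i \<in> {1..n}" "j \<in> {1..n}" for i j s
  proof -
    have "\<psi> (i,k,s-1) = \<psi>' (i,k,s-1)" if "k \<in> Pred n \<delta> (\<phi> s) j" for k
      using assms that \<open>s \<in> {1..t}\<close> \<open>i \<in> {1..n}\<close> by (auto simp: token_vars_def Pred_def)
    moreover have "\<psi> (i,j,s) = \<psi>' (i,j,s)"
      using assms that by (auto simp: token_vars_def)
    ultimately show ?thesis by (simp add: Psi_sat_iff)
  qed
  moreover have "C0_sat n \<psi> \<longleftrightarrow> C0_sat n \<psi>'"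
    using assms by (auto simp: C0_sat_def token_vars_def)
  ultimately show ?thesis unfolding all_sat_def by auto
qed

definition reach_assignment :: "nfa \<Rightarrow> (nat \<Rightarrow> bool) \<Rightarrow> nat \<times> nat \<times> nat \<Rightarrow> bool" where
  "reach_assignment \<delta> \<phi> = (\<lambda>(i,j,s). j \<in> delta_ext \<delta> {i} (moves \<phi> s))"

lemma all_sat_reach_assignment:
  assumes "nfa_wf n \<delta>"
  shows "all_sat n \<delta> \<phi> t (reach_assignment \<delta> \<phi>)"
proof -
  have "Psi_sat n \<delta> \<phi> (reach_assignment \<delta> \<phi>) i j (Suc s)" if "i \<in> {1..n}" for i j s
    using mem_delta_ext_snoc_iff_Pred[OF assms, of "{i}"] that
    by (simp add: Psi_sat_iff reach_assignment_def moves_Suc)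
  then have "Psi_sat n \<delta> \<phi> (reach_assignment \<delta> \<phi>) i j s" if "s \<in> {1..t}" "i \<in> {1..n}" for i j s
    using that by (cases s) auto
  then show ?thesis
    by (auto simp: all_sat_def C0_sat_def reach_assignment_def)
qed

lemma all_sat_imp_reach_assignment:
  assumes wf: "nfa_wf n \<delta>" and sat: "all_sat n \<delta> \<phi> t \<psi>"
    and "s \<le> t" and i: "i \<in> {1..n}" and "j \<in> {1..n}"
  shows "\<psi> (i,j,s) \<longleftrightarrow> reach_assignment \<delta> \<phi> (i,j,s)"
  using \<open>s \<le> t\<close> \<open>j \<in> {1..n}\<close>
proof (induction s arbitrary: j)
  case 0
  then show ?case
    using sat i by (cases "i = j") (auto simp: all_sat_def C0_sat_def reach_assignment_def)
next
  case (Suc s)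
  have "Psi_sat n \<delta> \<phi> \<psi> i j (Suc s)"
    using sat Suc.prems i unfolding all_sat_def by auto
  then have "\<psi> (i,j,Suc s) \<longleftrightarrow> (\<exists>k\<in>Pred n \<delta> (\<phi> (Suc s)) j. \<psi> (i,k,s))"
    by (simp add: Psi_sat_iff)
  also have "\<dots> \<longleftrightarrow> (\<exists>k\<in>Pred n \<delta> (\<phi> (Suc s)) j. k \<in> delta_ext \<delta> {i} (moves \<phi> s))"
    using Suc.IH Suc.prems by (auto simp: Pred_def reach_assignment_def)
  also have "\<dots> \<longleftrightarrow> reach_assignment \<delta> \<phi> (i,j,Suc s)"
    using mem_delta_ext_snoc_iff_Pred[OF wf, of "{i}"] i
    by (simp add: reach_assignment_def moves_Suc)
  finally show ?case .
qed

theorem lemma2: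
  fixes n l t :: nat and \<delta> :: nfa and \<phi> :: "nat \<Rightarrow> bool"
  assumes "nfa_wf n \<delta>" and "l > 0" and "t \<le> l"
  shows "(\<exists>!\<psi>. \<psi> \<in> token_vars n t \<rightarrow>\<^sub>E UNIV \<and> all_sat n \<delta> \<phi> t \<psi>) \<and>
         (\<forall>\<psi>. \<psi> \<in> token_vars n t \<rightarrow>\<^sub>E UNIV \<and> all_sat n \<delta> \<phi> t \<psi> \<longrightarrow>
            (\<forall>i\<in>{1..n}. \<forall>j\<in>{1..n}. \<forall>s\<in>{0..t}.
               (\<psi> (i,j,s) \<longleftrightarrow> game n \<delta> (moves \<phi> s) j i) \<and>
               (\<psi> (i,j,s) \<longleftrightarrow> j \<in> delta_ext \<delta> {i} (moves \<phi> s))))"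
proof -
  define \<psi>\<^sub>0 where "\<psi>\<^sub>0 = restrict (reach_assignment \<delta> \<phi>) (token_vars n t)"
  have \<psi>\<^sub>0: "\<psi>\<^sub>0 \<in> token_vars n t \<rightarrow>\<^sub>E UNIV \<and> all_sat n \<delta> \<phi> t \<psi>\<^sub>0"
    using all_sat_reach_assignment[OF assms(1)] all_sat_cong[of n t \<psi>\<^sub>0 "reach_assignment \<delta> \<phi>"]
    by (simp add: \<psi>\<^sub>0_def)
  have char: "\<forall>i\<in>{1..n}. \<forall>j\<in>{1..n}. \<forall>s\<in>{0..t}. \<psi> (i,j,s) \<longleftrightarrow> reach_assignment \<delta> \<phi> (i,j,s)"
    if "all_sat n \<delta> \<phi> t \<psi>" for \<psi>
    using all_sat_imp_reach_assignment[OF assms(1) that] by auto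
  have "\<psi> = \<psi>\<^sub>0" if "\<psi> \<in> token_vars n t \<rightarrow>\<^sub>E UNIV" "all_sat n \<delta> \<phi> t \<psi>" for \<psi>
    using \<psi>\<^sub>0 char[OF that(2)]
    by (intro PiE_ext[OF that(1)]) (auto simp: token_vars_def \<psi>\<^sub>0_def)
  with \<psi>\<^sub>0 have "\<exists>!\<psi>. \<psi> \<in> token_vars n t \<rightarrow>\<^sub>E UNIV \<and> all_sat n \<delta> \<phi> t \<psi>"
    by blast
  then show ?thesis
    using char game_iff_delta_ext by (auto simp: reach_assignment_def)
qed

end
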